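(* If $w\in\mathbb{R}^n$, $w\ge0$, is strongly bilevel feasible, then there exists an extreme point $x$ of $\mathcal{X}$ such that $x$ is bilevel feasible and $x_{\mathcal{A}_1}=w$.
   Context: Single-commodity network pricing setting: $G=(\mathcal{V},\mathcal{A})$ directed graph, arc costs $c\ge0$, nonempty tolled arc set $\mathcal{A}_1\subsetneq\mathcal{A}$, $n=|\mathcal{A}_1|$, $N$ node–arc incidence matrix, single origin $o$ and destination $d$ connected by a toll-free path, $b_o=1$, $b_d=-1$, $b_i=0$ otherwise, $\mathcal{X}=\{x\in\mathbb{R}^{\mathcal{A}}: Nx=b,\ x\ge0\}$, $x_{\mathcal{A}_1}$ the restriction of $x$ to $\mathcal{A}_1$. Let $f(t)=\min\{c^\top x+t^\top x_{\mathcal{A}_1}: x\in\mathcal{X}\}$ for $t\in\mathbb{R}^n$, $t\ge0$, $f(t)=-\infty$ otherwise, and $g(w)=\sup_{t\in\mathbb{R}^n}\{f(t)-t^\top w\}$. A vector $w\ge0$ is strongly bilevel feasible when $\{w\}$ is a reaction set, i.e. $\{w\}=\{w':(w',z)\in F\text{ for some }z\}$ for a face $F$ of $\operatorname{epi}(g)$ whose affine hull's direction space does not contain $(0,1)$. A point $x\in\mathcal{X}$ is bilevel feasible if the hyperplane $\{(t,z): z=-c^\top x-t^\top x_{\mathcal{A}_1}\}$ supports $\operatorname{epi}(-f)$ (i.e. $\operatorname{epi}(-f)$ lies in $\{z\ge -c^\top x-t^\top x_{\mathcal{A}_1}\}$ and meets the hyperplane). *)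

theory Defs
  imports "HOL-Analysis.Analysis" "HOL-Library.Extended_Real"
begin

text \<open>Tolled arcs A1 = range sigma, enumerated injectively by the finite type 'k,
  so that n = CARD('k) and R^n = real^'k.\<close>

definition flows :: "('a::finite \<Rightarrow> 'v) \<Rightarrow> ('a \<Rightarrow> 'v) \<Rightarrow> 'v \<Rightarrow> 'v \<Rightarrow> (real^'a) set" where
  "flows src tgt orig dest =
     {x. (\<forall>i. (\<Sum>a\<in>{a. src a = i}. x $ a) - (\<Sum>a\<in>{a. tgt a = i}. x $ a)
             = (if i = orig then 1 else if i = dest then -1 else 0))
         \<and> (\<forall>a. 0 \<le> x $ a)}"

definition restr :: "('k::finite \<Rightarrow> 'a::finite) \<Rightarrow> real^'a \<Rightarrow> real^'k" where
  "restr \<sigma> x = (\<chi> k. x $ \<sigma> k)"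

definition fval :: "('a::finite \<Rightarrow> 'v) \<Rightarrow> ('a \<Rightarrow> 'v) \<Rightarrow> 'v \<Rightarrow> 'v \<Rightarrow> ('k::finite \<Rightarrow> 'a)
                    \<Rightarrow> real^'a \<Rightarrow> real^'k \<Rightarrow> ereal" where
  "fval src tgt orig dest \<sigma> c t =
     (if (\<forall>k. 0 \<le> t $ k)
      then (INF x\<in>flows src tgt orig dest. ereal (c \<bullet> x + t \<bullet> restr \<sigma> x))
      else -\<infinity>)"

definition gfun :: "('a::finite \<Rightarrow> 'v) \<Rightarrow> ('a \<Rightarrow> 'v) \<Rightarrow> 'v \<Rightarrow> 'v \<Rightarrow> ('k::finite \<Rightarrow> 'a)
                    \<Rightarrow> real^'a \<Rightarrow> real^'k \<Rightarrow> ereal" where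
  "gfun src tgt orig dest \<sigma> c w =
     (SUP t. fval src tgt orig dest \<sigma> c t - ereal (t \<bullet> w))"

definition epi :: "('b \<Rightarrow> ereal) \<Rightarrow> ('b \<times> real) set" where
  "epi h = {(u, z). h u \<le> ereal z}"

definition dirspace :: "('b::real_vector) set \<Rightarrow> 'b set" where
  "dirspace S = {u - v | u v. u \<in> affine hull S \<and> v \<in> affine hull S}"

definition reaction_set :: "(('b::real_vector) \<times> real) set \<Rightarrow> 'b set \<Rightarrow> bool" where
  "reaction_set E R \<longleftrightarrow>
     (\<exists>F. F face_of E \<and> (0, 1) \<notin> dirspace F \<and> R = {w'. \<exists>z. (w', z) \<in> F})"

definition strongly_bilevel_feasible ::
  "('a::finite \<Rightarrow> 'v) \<Rightarrow> ('a \<Rightarrow> 'v) \<Rightarrow> 'v \<Rightarrow> 'v \<Rightarrow> ('k::finite \<Rightarrow> 'a) \<Rightarrow> real^'a \<Rightarrow> real^'k \<Rightarrow> bool" where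
  "strongly_bilevel_feasible src tgt orig dest \<sigma> c w \<longleftrightarrow>
     reaction_set (epi (gfun src tgt orig dest \<sigma> c)) {w}"

definition bilevel_feasible ::
  "('a::finite \<Rightarrow> 'v) \<Rightarrow> ('a \<Rightarrow> 'v) \<Rightarrow> 'v \<Rightarrow> 'v \<Rightarrow> ('k::finite \<Rightarrow> 'a) \<Rightarrow> real^'a \<Rightarrow> real^'a \<Rightarrow> bool" where
  "bilevel_feasible src tgt orig dest \<sigma> c x \<longleftrightarrow>
     x \<in> flows src tgt orig dest \<and>
     epi (\<lambda>t. - fval src tgt orig dest \<sigma> c t) \<subseteq> {(t, z). z \<ge> - (c \<bullet> x) - t \<bullet> restr \<sigma> x} \<and>
     epi (\<lambda>t. - fval src tgt orig dest \<sigma> c t) \<inter> {(t, z). z = - (c \<bullet> x) - t \<bullet> restr \<sigma> x} \<noteq> {}"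

end

(*
  The face of epi g behind the reaction set {w} contains no vertical direction, so it is a single
  point (w, g w), an extreme point of epi g. Weak duality sends every flow y to the point
  (y_A1, c^T y) of epi g; as this map is linear, the flows with y_A1 = w and c^T y = g w form a
  face S of the flow polyhedron. Since g is antitone, a flow attaining g w, which LP duality
  provides, lies in S; LP duality also gives tolls t >= 0 with f t = g w + t^T w, which certify
  that every flow in S is bilevel feasible. Finally S lies in the nonnegative orthant, so it has
  an extreme point, which is an extreme point of the flow polyhedron as S is a face. Because the
  flow polyhedron is unbounded, LP duality is applied to the polytope of flows bounded by
  |V|^2, which every flow dominates by path decomposition.
*)
theory Submission
  imports Defs
begin

section \<open>Cones, faces and extreme points\<close>

lemma nonneg_inner_mono:
  fixes t x y :: "real^'n"
  assumes "0 \<le> t" "x \<le> y"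
  shows "t \<bullet> x \<le> t \<bullet> y"
  unfolding inner_vec_def using assms by (intro sum_mono) (simp add: less_eq_vec_def mult_left_mono)

lemma separating_hyperplane_closed_convex_cone:
  fixes G :: "'a::euclidean_space set"
  assumes "convex_cone G" "closed G" "z \<notin> G"
  shows "\<exists>a. a \<bullet> z < 0 \<and> (\<forall>x\<in>G. 0 \<le> a \<bullet> x)"
proof -
  obtain a b where ab: "a \<bullet> z < b" "\<forall>x\<in>G. b < a \<bullet> x"
    using separating_hyperplane_closed_point[OF _ assms(2,3)] assms(1)
    by (auto simp: convex_cone_def)
  have "b < 0"
    using ab(2) convex_cone_contains_0[OF assms(1)] by fastforce
  have nonneg: "0 \<le> a \<bullet> x" if "x \<in> G" for x
  proof (rule ccontr)
    assume "\<not> 0 \<le> a \<bullet> x"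
    then have "(b / (a \<bullet> x)) *\<^sub>R x \<in> G"
      using \<open>b < 0\<close> that by (intro convex_cone_scaleR[OF assms(1)]) (auto simp: divide_nonpos_neg)
    then show False
      using ab(2) \<open>\<not> 0 \<le> a \<bullet> x\<close> by fastforce
  qed
  show ?thesis
    using ab(1) \<open>b < 0\<close> nonneg by (intro exI[of _ a]) auto
qed

lemma closed_convex_cone_orthant_multiplier:
  fixes G :: "((real^'k) \<times> real) set"
  assumes "convex_cone G" "closed G" "(0, -1) \<notin> G" "\<And>k. (axis k 1, 0) \<in> G"
  shows "\<exists>u s. 0 \<le> u \<and> 0 < s \<and> (\<forall>q\<in>G. 0 \<le> u \<bullet> fst q + s * snd q)"
proof -
  obtain a where a: "a \<bullet> (0, -1) < 0" "\<forall>p\<in>G. 0 \<le> a \<bullet> p"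
    using separating_hyperplane_closed_convex_cone assms(1-3) by blast
  obtain u s where us: "a = (u, s)"
    by fastforce
  have "0 \<le> (u, s) \<bullet> (axis k 1, 0)" for k
    using a(2) us assms(4) by blast
  then have "0 \<le> u"
    by (simp add: less_eq_vec_def inner_axis)
  moreover have "0 \<le> u \<bullet> fst q + s * snd q" if "q \<in> G" for q
    using a(2) us that by (cases q) auto
  moreover have "0 < s"
    using a(1) us by simp
  ultimately show ?thesis
    by blast
qed

lemma finite_nonneg_multiplier:
  fixes W Q :: "((real^'k) \<times> real) set"
  assumes "finite W" "W \<subseteq> Q" "convex Q"
    and no_descent: "\<not> (\<exists>q\<in>Q. fst q \<le> 0 \<and> snd q < 0)"
  shows "\<exists>u s. 0 \<le> u \<and> 0 < s \<and> (\<forall>q\<in>W. 0 \<le> u \<bullet> fst q + s * snd q)"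
proof (cases "Q = {}")
  case True
  then show ?thesis
    using assms(2) by (intro exI[of _ 0] exI[of _ 1]) auto
next
  case False
  define E :: "((real^'k) \<times> real) set" where "E = range (\<lambda>k. (axis k 1, 0)) \<union> {(0, 1)}"
  define Pos :: "((real^'k) \<times> real) set" where "Pos = {u. 0 \<le> u} \<times> {s. 0 \<le> s}"
  define C where "C = (\<Union>p\<in>conic hull Q. \<Union>e\<in>Pos. {p + e})"
  \<comment> \<open>C need not be closed; the finitely generated cone G inside it is, so we separate from G.\<close>
  define G where "G = convex_cone hull (W \<union> E)"
  have "convex_cone Pos"
    unfolding Pos_def by (intro convex_cone_Times) (auto simp: convex_cone_iff less_eq_vec_def)
  then have "convex_cone C"
    unfolding C_def using False assms(3)
    by (intro convex_cone_sums) (auto simp: convex_cone_def convex_conic_hull conic_conic_hull conic_hull_eq_empty)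
  moreover have "W \<union> E \<subseteq> C"
  proof -
    have "0 \<in> conic hull Q"
      using False by simp
    moreover have "0 \<in> Pos" "E \<subseteq> Pos"
      by (auto simp: Pos_def E_def zero_prod_def less_eq_vec_def axis_def)
    moreover have "W \<subseteq> conic hull Q"
      using assms(2) hull_subset[of Q conic] by blast
    ultimately show ?thesis
      unfolding C_def by (force intro: add_0 add_0_right)
  qed
  ultimately have "G \<subseteq> C"
    unfolding G_def by (rule hull_minimal[rotated])
  have "(0, -1) \<notin> C"
  proof
    assume "(0, -1) \<in> C"
    then obtain \<mu> q e r where "0 \<le> \<mu>" "q \<in> Q" "0 \<le> e" "0 \<le> r" "(0, -1) = \<mu> *\<^sub>R q + (e, r)"
      unfolding C_def Pos_def conic_hull_explicit by blast
    then have "\<mu> *\<^sub>R fst q \<le> 0" "\<mu> * snd q < 0"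
      by (auto simp: less_eq_vec_def vec_eq_iff add_eq_0_iff prod_eq_iff)
    moreover from this(2) have "0 < \<mu>"
      using \<open>0 \<le> \<mu>\<close> by (cases "\<mu> = 0") auto
    ultimately have "fst q \<le> 0" "snd q < 0"
      by (auto simp: less_eq_vec_def mult_le_0_iff mult_less_0_iff)
    then show False
      using no_descent \<open>q \<in> Q\<close> by blast
  qed
  moreover have "closed G"
    unfolding G_def E_def using assms(1) by (intro closed_convex_cone_hull) auto
  moreover have "(axis k 1, 0) \<in> G" "W \<subseteq> G" for k
    unfolding G_def E_def by (auto intro: hull_inc)
  ultimately show ?thesis
    using closed_convex_cone_orthant_multiplier[of G] \<open>G \<subseteq> C\<close> convex_cone_convex_cone_hull
    unfolding G_def by blast
qed

lemma polytope_lagrange_multiplier: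
  fixes P :: "'a::euclidean_space set" and A :: "'a \<Rightarrow> real^'k"
  assumes "polytope P" "linear A"
    and infeasible: "\<not> (\<exists>y\<in>P. A y \<le> w \<and> c \<bullet> y < \<gamma>)"
  shows "\<exists>t\<ge>0. \<forall>y\<in>P. \<gamma> + t \<bullet> w \<le> c \<bullet> y + t \<bullet> A y"
proof -
  obtain V where "finite V" and P_eq: "P = convex hull V"
    using assms(1) by (auto simp: polytope_def)
  define L where "L y = (A y, c \<bullet> y)" for y
  have "linear L"
    unfolding L_def using assms(2) by (intro linearI) (auto simp: linear_add linear_scale inner_add_right)
  define Q where "Q = (+) (- (w, \<gamma>)) ` L ` P"
  have "convex Q"
    unfolding Q_def P_eq by (intro convex_translation convex_linear_image \<open>linear L\<close> convex_convex_hull)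
  moreover have "\<not> (\<exists>q\<in>Q. fst q \<le> 0 \<and> snd q < 0)"
    using infeasible by (auto simp: Q_def L_def less_eq_vec_def)
  moreover have "(+) (- (w, \<gamma>)) ` L ` V \<subseteq> Q"
    unfolding Q_def P_eq by (intro image_mono hull_subset)
  ultimately obtain u s where us: "0 \<le> u" "0 < s"
    "\<forall>v\<in>V. u \<bullet> w + s * \<gamma> \<le> u \<bullet> A v + s * (c \<bullet> v)"
    using finite_nonneg_multiplier[of "(+) (- (w, \<gamma>)) ` L ` V" Q] \<open>finite V\<close>
    by (auto simp: L_def inner_diff_right algebra_simps)
  have "P \<subseteq> L -` {p. (u, s) \<bullet> (w, \<gamma>) \<le> (u, s) \<bullet> p}"
    unfolding P_eq using us(3)
    by (intro hull_minimal convex_linear_vimage \<open>linear L\<close> convex_halfspace_ge) (auto simp: L_def)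
  then have "\<gamma> + (1 / s) *\<^sub>R u \<bullet> w \<le> c \<bullet> y + (1 / s) *\<^sub>R u \<bullet> A y" if "y \<in> P" for y
  proof -
    have "(u \<bullet> w + s * \<gamma>) / s \<le> (u \<bullet> A y + s * (c \<bullet> y)) / s"
      using \<open>P \<subseteq> _\<close> that \<open>0 < s\<close> by (auto simp: L_def divide_right_mono)
    then show ?thesis
      using \<open>0 < s\<close> by (simp add: add_divide_distrib)
  qed
  moreover have "0 \<le> (1 / s) *\<^sub>R u"
    using us(1,2) by (simp add: less_eq_vec_def)
  ultimately show ?thesis
    by blast
qed

lemma face_of_linear_preimage:
  assumes "linear h" "F face_of T" "h ` S \<subseteq> T" "convex S"
  shows "S \<inter> h -` F face_of S"
  unfolding face_of_def
proof (intro conjI)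
  show "convex (S \<inter> h -` F)"
    using assms face_of_imp_convex[OF assms(2)] by (intro convex_Int convex_linear_vimage)
  show "\<forall>a\<in>S. \<forall>b\<in>S. \<forall>x\<in>S \<inter> h -` F. x \<in> open_segment a b \<longrightarrow> a \<in> S \<inter> h -` F \<and> b \<in> S \<inter> h -` F"
  proof (intro ballI impI)
    fix a b x assume ab: "a \<in> S" "b \<in> S" and x: "x \<in> S \<inter> h -` F" "x \<in> open_segment a b"
    then obtain u where u: "0 < u" "u < 1" "x = (1 - u) *\<^sub>R a + u *\<^sub>R b"
      by (auto simp: in_segment)
    then have hx: "h x = (1 - u) *\<^sub>R h a + u *\<^sub>R h b"
      using assms(1) by (simp add: linear_add linear_scale)
    show "a \<in> S \<inter> h -` F \<and> b \<in> S \<inter> h -` F"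
    proof (cases "h a = h b")
      case True
      then have "h x = h a" "h x = h b"
        using hx by (simp_all flip: scaleR_left_distrib)
      then show ?thesis using ab x by auto
    next
      case False
      then have "h x \<in> open_segment (h a) (h b)"
        using u hx by (auto simp: in_segment)
      then show ?thesis
        using face_ofD[OF assms(2)] assms(3) ab x by blast
    qed
  qed
qed blast

lemma extreme_point_exists_nonneg:
  fixes S :: "(real^'n) set"
  assumes "closed S" "convex S" "S \<noteq> {}" "\<forall>x\<in>S. 0 \<le> x"
  shows "\<exists>x. x extreme_point_of S"
proof -
  obtain x0 where "x0 \<in> S"
    using assms(3) by blast
  \<comment> \<open>On the orthant the sublevel sets of the coordinate sum are bounded, so its minimisers
    over S form a compact face.\<close>
  define r where "r = 1 \<bullet> x0"
  have bounded_level: "x \<in> cbox 0 (vec s)" if "x \<in> S" "1 \<bullet> x \<le> s" for x s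
  proof -
    have "x $ i \<le> (\<Sum>j\<in>UNIV. x $ j)" for i
      using assms(4) that(1) by (intro member_le_sum) (auto simp: less_eq_vec_def)
    then show ?thesis
      using assms(4) that by (auto simp: mem_box_cart inner_vec_def less_eq_vec_def vec_def
          intro: order_trans)
  qed
  define K where "K = S \<inter> {x. 1 \<bullet> x \<le> r}"
  have "compact K"
    unfolding compact_eq_bounded_closed K_def
    using bounded_level by (auto intro!: closed_Int assms(1) closed_halfspace_le
        bounded_subset[OF bounded_cbox, of _ 0 "vec r"])
  moreover have "x0 \<in> K"
    using \<open>x0 \<in> S\<close> by (simp add: K_def r_def)
  ultimately have "\<exists>x1\<in>K. \<forall>x\<in>K. 1 \<bullet> x1 \<le> 1 \<bullet> x"
    by (intro continuous_attains_inf) (auto intro: continuous_intros)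
  then obtain x1 where x1: "x1 \<in> K" "\<forall>x\<in>K. 1 \<bullet> x1 \<le> 1 \<bullet> x"
    by blast
  define m where "m = 1 \<bullet> x1"
  have m_le: "m \<le> 1 \<bullet> x" if "x \<in> S" for x
    using x1 that by (cases "x \<in> K") (auto simp: K_def m_def)
  define F where "F = S \<inter> {x. 1 \<bullet> x = m}"
  have "F face_of S"
    unfolding F_def using assms(2) m_le by (intro face_of_Int_supporting_hyperplane_ge) auto
  moreover have "compact F"
    unfolding compact_eq_bounded_closed F_def
    using bounded_level by (auto intro!: closed_Int assms(1) closed_hyperplane
        bounded_subset[OF bounded_cbox, of _ 0 "vec m"])
  moreover have "F \<noteq> {}"
    using x1(1) by (auto simp: F_def K_def m_def)
  ultimately obtain e where "e extreme_point_of F"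
    using extreme_point_exists_convex face_of_imp_convex by blast
  then show ?thesis
    using extreme_point_of_face[OF \<open>F face_of S\<close>] by blast
qed

lemma reaction_set_singleton_imp_extreme_point:
  assumes "reaction_set E {w}"
  shows "\<exists>z. (w, z) extreme_point_of E"
proof -
  obtain F where F: "F face_of E" "(0, 1) \<notin> dirspace F" "{w} = {w'. \<exists>z. (w', z) \<in> F}"
    using assms by (auto simp: reaction_set_def)
  then obtain z where "(w, z) \<in> F"
    by blast
  have "F = {(w, z)}"
  proof (intro set_eqI iffI)
    fix q assume "q \<in> F"
    then obtain z' where q: "q = (w, z')"
      using F(3) by (cases q) blast
    have "z' = z"
    proof (rule ccontr)
      assume "z' \<noteq> z"
      have "(w, z) \<in> affine hull F" "(w, z') \<in> affine hull F"
        using \<open>(w, z) \<in> F\<close> \<open>q \<in> F\<close> q by (auto intro: hull_inc)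
      define s where "s = 1 / (z' - z)"
      have "(1 - s) * z + s * z' = z + s * (z' - z)"
        by (simp add: algebra_simps)
      also have "\<dots> = z + 1"
        using \<open>z' \<noteq> z\<close> by (simp add: s_def)
      finally have "(w, z + 1) = (1 - s) *\<^sub>R (w, z) + s *\<^sub>R (w, z')"
        by (simp flip: scaleR_left_distrib)
      also have "\<dots> \<in> affine hull F"
        using \<open>(w, z) \<in> affine hull F\<close> \<open>(w, z') \<in> affine hull F\<close>
        by (intro mem_affine affine_affine_hull) auto
      finally have "(0, 1) \<in> dirspace F"
        using \<open>(w, z) \<in> affine hull F\<close> unfolding dirspace_def by force
      with F(2) show False
        by blast
    qed
    then show "q \<in> {(w, z)}" using q by simp
  qed (use \<open>(w, z) \<in> F\<close> in simp)
  then show ?thesis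
    using F(1) face_of_singleton by metis
qed

lemma extreme_point_of_epi_eq:
  assumes "(w, z) extreme_point_of epi h"
  shows "h w = ereal z"
proof (rule ccontr)
  assume "h w \<noteq> ereal z"
  moreover have "h w \<le> ereal z"
    using assms by (auto simp: extreme_point_of_def epi_def)
  ultimately obtain z1 where "h w \<le> ereal z1" "z1 < z"
    using ereal_dense2 less_le by (metis ereal_less_eq(3) less_imp_le)
  then have "(w, z1) \<in> epi h" "(w, 2 * z - z1) \<in> epi h"
    by (auto simp: epi_def elim: order_trans)
  moreover have "(w, z) = midpoint (w, z1) (w, 2 * z - z1)"
    by (simp add: midpoint_def scaleR_2 flip: scaleR_right_distrib)
  then have "(w, z) \<in> open_segment (w, z1) (w, 2 * z - z1)"
    using \<open>z1 < z\<close> by simp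
  ultimately show False
    using assms unfolding extreme_point_of_def by blast
qed

lemma extreme_point_of_epi_antimono:
  fixes h :: "real^'n \<Rightarrow> ereal"
  assumes "antimono h" "(w, z) extreme_point_of epi h"
    and "(u, z') \<in> epi h" "u \<le> w" "z' \<le> z"
  shows "u = w \<and> z' = z"
proof (rule ccontr)
  assume "\<not> (u = w \<and> z' = z)"
  have "h (2 *\<^sub>R w - u) \<le> h w"
    using assms(4) by (intro antimonoD[OF assms(1)]) (auto simp: less_eq_vec_def)
  also have "\<dots> \<le> ereal z"
    using assms(2) by (simp add: extreme_point_of_def epi_def)
  also have "\<dots> \<le> ereal (2 * z - z')"
    using assms(5) by simp
  finally have "(2 *\<^sub>R w - u, 2 * z - z') \<in> epi h"
    by (simp add: epi_def)
  moreover have "(w, z) \<in> open_segment (u, z') (2 *\<^sub>R w - u, 2 * z - z')"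
  proof -
    have "(w, z) = midpoint (u, z') (2 *\<^sub>R w - u, 2 * z - z')"
      unfolding midpoint_def by simp
    moreover have "(u, z') \<noteq> (2 *\<^sub>R w - u, 2 * z - z')"
      using \<open>\<not> (u = w \<and> z' = z)\<close> by (auto simp: vec_eq_iff)
    ultimately show ?thesis
      by (metis midpoint_in_open_segment)
  qed
  ultimately show False
    using assms(2,3) unfolding extreme_point_of_def by blast
qed

section \<open>Flows\<close>

definition incidence :: "('a::finite \<Rightarrow> 'v) \<Rightarrow> ('a \<Rightarrow> 'v) \<Rightarrow> 'v \<Rightarrow> real^'a" where
  "incidence src tgt i = (\<chi> a. of_bool (src a = i) - of_bool (tgt a = i))"

lemma incidence_inner:
  "incidence src tgt i \<bullet> x = (\<Sum>a | src a = i. x $ a) - (\<Sum>a | tgt a = i. x $ a)"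
proof -
  have "incidence src tgt i \<bullet> x
      = (\<Sum>a\<in>UNIV. (if src a = i then x $ a else 0) - (if tgt a = i then x $ a else 0))"
    unfolding incidence_def inner_vec_def by (intro sum.cong) auto
  then show ?thesis
    by (simp add: sum_subtractf sum.If_cases)
qed

lemma incidence_inner_axis:
  "incidence src tgt i \<bullet> axis a 1 = of_bool (src a = i) - of_bool (tgt a = i)"
  by (simp add: incidence_def inner_axis)

lemma sum_incidence_inner:
  fixes src tgt :: "'a::finite \<Rightarrow> 'v::finite"
  shows "(\<Sum>i\<in>R. incidence src tgt i \<bullet> x) = (\<Sum>a | src a \<in> R. x $ a) - (\<Sum>a | tgt a \<in> R. x $ a)"
proof -
  have group: "(\<Sum>i\<in>R. \<Sum>a | h a = i. x $ a) = (\<Sum>a | h a \<in> R. x $ a)" for h :: "'a \<Rightarrow> 'v"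
  proof -
    have "(\<Sum>i\<in>R. \<Sum>a | h a = i. x $ a) = (\<Sum>i\<in>R. \<Sum>a\<in>{a \<in> {a. h a \<in> R}. h a = i}. x $ a)"
      by (intro sum.cong) auto
    also have "\<dots> = (\<Sum>a | h a \<in> R. x $ a)"
      by (rule sum.group) auto
    finally show ?thesis .
  qed
  show ?thesis
    by (simp add: incidence_inner sum_subtractf group)
qed

definition flows_of_value :: "('a::finite \<Rightarrow> 'v) \<Rightarrow> ('a \<Rightarrow> 'v) \<Rightarrow> 'v \<Rightarrow> 'v \<Rightarrow> real \<Rightarrow> (real^'a) set" where
  "flows_of_value src tgt orig dest v =
     {x. 0 \<le> x \<and> (\<forall>i. incidence src tgt i \<bullet> x = (if i = orig then v else if i = dest then - v else 0))}"

lemma flows_eq_flows_of_value: "flows src tgt orig dest = flows_of_value src tgt orig dest 1"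
  by (auto simp: flows_def flows_of_value_def incidence_inner less_eq_vec_def)

lemma relpow_arcs_imp_unit_flow:
  assumes "(u, v) \<in> {(src a, tgt a) | a. P a} ^^ n"
  shows "\<exists>p::real^'a::finite. (\<forall>i. incidence src tgt i \<bullet> p = of_bool (i = u) - of_bool (i = v))
           \<and> (\<forall>a. 0 \<le> p $ a \<and> p $ a \<le> real n \<and> (0 < p $ a \<longrightarrow> P a))"
  using assms
proof (induction n arbitrary: v)
  case 0
  then show ?case by (intro exI[of _ 0]) auto
next
  case (Suc n)
  then obtain m a where walk: "(u, m) \<in> {(src a, tgt a) | a. P a} ^^ n"
    and arc: "m = src a" "v = tgt a" "P a"
    by auto
  from Suc.IH[OF walk] obtain p where
    p: "\<forall>i. incidence src tgt i \<bullet> p = of_bool (i = u) - of_bool (i = m)"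
       "\<forall>b. 0 \<le> p $ b \<and> p $ b \<le> real n \<and> (0 < p $ b \<longrightarrow> P b)"
    by blast
  show ?case
  proof (intro exI[of _ "p + axis a 1"] conjI allI)
    fix i show "incidence src tgt i \<bullet> (p + axis a 1) = of_bool (i = u) - of_bool (i = v)"
      using p(1) arc by (simp add: inner_add_right incidence_inner_axis)
  next
    fix b show "0 \<le> (p + axis a 1) $ b" "(p + axis a 1) $ b \<le> real (Suc n)"
      "0 < (p + axis a 1) $ b \<longrightarrow> P b"
      using p(2)[rule_format, of b] arc by (auto simp: axis_def)
  qed
qed

lemma flow_support_connects:
  fixes src tgt :: "'a::finite \<Rightarrow> 'v::finite"
  assumes x: "x \<in> flows_of_value src tgt orig dest v" and "0 < v" "orig \<noteq> dest"
  shows "(orig, dest) \<in> {(src a, tgt a) | a. 0 < x $ a}\<^sup>*"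
proof (rule ccontr)
  define R where "R = {i. (orig, i) \<in> {(src a, tgt a) | a. 0 < x $ a}\<^sup>*}"
  assume "(orig, dest) \<notin> {(src a, tgt a) | a. 0 < x $ a}\<^sup>*"
  then have "dest \<notin> R" "orig \<in> R" by (auto simp: R_def)
  then have "(\<Sum>i\<in>R. incidence src tgt i \<bullet> x) = (\<Sum>i\<in>R. if i = orig then v else 0)"
    using x by (intro sum.cong) (auto simp: flows_of_value_def)
  also have "\<dots> = v"
    using \<open>orig \<in> R\<close> by simp
  finally have "(\<Sum>i\<in>R. incidence src tgt i \<bullet> x) = v" .
  moreover have "(\<Sum>a | src a \<in> R. x $ a) \<le> (\<Sum>a | tgt a \<in> R. x $ a)"
  proof -
    have nonneg: "0 \<le> x $ a" for a
      using x by (simp add: flows_of_value_def less_eq_vec_def)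
    have "(\<Sum>a | src a \<in> R. x $ a) = (\<Sum>a | src a \<in> R \<and> 0 < x $ a. x $ a)"
      using nonneg by (intro sum.mono_neutral_right) (auto simp: less_le)
    also have "\<dots> \<le> (\<Sum>a | tgt a \<in> R. x $ a)"
      using nonneg by (intro sum_mono2) (auto simp: R_def intro: rtrancl_into_rtrancl)
    finally show ?thesis .
  qed
  ultimately show False
    using \<open>0 < v\<close> by (simp add: sum_incidence_inner)
qed

lemma unit_flow_in_support:
  fixes src tgt :: "'a::finite \<Rightarrow> 'v::finite"
  assumes x: "x \<in> flows_of_value src tgt orig dest v" and "0 < v" and od: "orig \<noteq> dest"
  shows "\<exists>p \<in> flows_of_value src tgt orig dest 1.
           (\<forall>a. p $ a \<le> real CARD('v \<times> 'v)) \<and> (\<forall>a. 0 < p $ a \<longrightarrow> 0 < x $ a)"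
proof -
  let ?E = "{(src a, tgt a) | a. 0 < x $ a}"
  obtain n where "n \<le> card ?E" "(orig, dest) \<in> ?E ^^ n"
    using flow_support_connects[OF assms] rtrancl_finite_eq_relpow[of ?E] by auto
  moreover have "card ?E \<le> CARD('v \<times> 'v)"
    by (rule card_mono) auto
  ultimately have n_le: "real n \<le> real CARD('v \<times> 'v)"
    by linarith
  obtain p :: "real^'a" where
    "\<forall>i. incidence src tgt i \<bullet> p = of_bool (i = orig) - of_bool (i = dest)"
    "\<forall>a. 0 \<le> p $ a \<and> p $ a \<le> real n \<and> (0 < p $ a \<longrightarrow> 0 < x $ a)"
    using relpow_arcs_imp_unit_flow[OF \<open>(orig, dest) \<in> ?E ^^ n\<close>] by blast
  then show ?thesis
    using od n_le by (intro bexI[of _ p]) (auto simp: flows_of_value_def less_eq_vec_def intro: order_trans)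
qed

lemma maximal_scaled_le:
  fixes x p :: "real^'n"
  assumes "0 \<le> x" "0 \<le> p" "p \<noteq> 0" "\<forall>a. 0 < p $ a \<longrightarrow> 0 < x $ a" "0 < v"
  shows "\<exists>l. 0 < l \<and> l \<le> v \<and> l *\<^sub>R p \<le> x \<and> (l = v \<or> (\<exists>a. 0 < x $ a \<and> x $ a = l * p $ a))"
proof -
  define A where "A = {a. 0 < p $ a}"
  have "A \<noteq> {}"
    using assms(2,3) by (auto simp: A_def vec_eq_iff less_eq_vec_def less_le)
  define M where "M = Min ((\<lambda>a. x $ a / p $ a) ` A)"
  have "0 < M"
    using \<open>A \<noteq> {}\<close> assms(4) by (auto simp: M_def A_def)
  have M_le: "M * p $ a \<le> x $ a" for a
  proof (cases "a \<in> A")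
    case True
    then have "M \<le> x $ a / p $ a" by (simp add: M_def)
    then show ?thesis using True by (simp add: A_def pos_le_divide_eq)
  next
    case False
    then have "p $ a = 0"
      using assms(2) by (simp add: A_def less_eq_vec_def order_antisym)
    then show ?thesis using assms(1) by (simp add: less_eq_vec_def)
  qed
  have "M \<in> (\<lambda>a. x $ a / p $ a) ` A"
    unfolding M_def using \<open>A \<noteq> {}\<close> by (intro Min_in) auto
  then obtain a where "a \<in> A" "M = x $ a / p $ a" by blast
  then have witness: "\<exists>a. 0 < x $ a \<and> x $ a = M * p $ a"
    using assms(4) by (auto simp: A_def)
  moreover have "min v M * p $ a \<le> x $ a" for a
  proof -
    have "min v M * p $ a \<le> M * p $ a"
      using assms(2) by (intro mult_right_mono) (auto simp: less_eq_vec_def)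
    then show ?thesis using M_le[of a] by linarith
  qed
  ultimately show ?thesis
    using \<open>0 < M\<close> \<open>0 < v\<close> by (intro exI[of _ "min v M"] conjI) (auto simp: less_eq_vec_def min_def)
qed

lemma flow_peel_unit_flow:
  fixes src tgt :: "'a::finite \<Rightarrow> 'v::finite"
  assumes x: "x \<in> flows_of_value src tgt orig dest v" and "0 < v" "orig \<noteq> dest"
  obtains p l where "p \<in> flows_of_value src tgt orig dest 1" "\<forall>a. p $ a \<le> real CARD('v \<times> 'v)"
    "0 < l" "l \<le> v" "x - l *\<^sub>R p \<in> flows_of_value src tgt orig dest (v - l)"
    "l = v \<or> card {a. 0 < (x - l *\<^sub>R p) $ a} < card {a. 0 < x $ a}"
proof -
  obtain p where p: "p \<in> flows_of_value src tgt orig dest 1" "\<forall>a. p $ a \<le> real CARD('v \<times> 'v)"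
    "\<forall>a. 0 < p $ a \<longrightarrow> 0 < x $ a"
    using unit_flow_in_support[OF assms] by blast
  have "p \<noteq> 0"
    using p(1) by (auto simp: flows_of_value_def dest: spec[of _ orig])
  with p x obtain l where l: "0 < l" "l \<le> v" "l *\<^sub>R p \<le> x"
    "l = v \<or> (\<exists>a. 0 < x $ a \<and> x $ a = l * p $ a)"
    using maximal_scaled_le[of x p v] \<open>0 < v\<close> by (auto simp: flows_of_value_def)
  have "x - l *\<^sub>R p \<in> flows_of_value src tgt orig dest (v - l)"
    using x p(1) l(3) by (auto simp: flows_of_value_def inner_diff_right algebra_simps)
  moreover have "card {b. 0 < (x - l *\<^sub>R p) $ b} < card {b. 0 < x $ b}"
    if "0 < x $ a" "x $ a = l * p $ a" for a
  proof (rule psubset_card_mono)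
    have "0 \<le> l * p $ b" for b
      using p(1) \<open>0 < l\<close> by (simp add: flows_of_value_def less_eq_vec_def)
    then have "{b. 0 < (x - l *\<^sub>R p) $ b} \<subseteq> {b. 0 < x $ b}"
      by (auto intro: le_less_trans)
    moreover have "a \<in> {b. 0 < x $ b} - {b. 0 < (x - l *\<^sub>R p) $ b}"
      using that by simp
    ultimately show "{b. 0 < (x - l *\<^sub>R p) $ b} \<subset> {b. 0 < x $ b}"
      by blast
  qed simp
  ultimately show ?thesis
    using that p l by blast
qed

(* Peel off bounded unit flows; each step empties an arc of the support or exhausts the value. *)
lemma flow_dominates_bounded_flow:
  fixes src tgt :: "'a::finite \<Rightarrow> 'v::finite"
  assumes "x \<in> flows_of_value src tgt orig dest v" "0 \<le> v" and od: "orig \<noteq> dest"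
  shows "\<exists>y \<in> flows_of_value src tgt orig dest v. y \<le> x \<and> (\<forall>a. y $ a \<le> v * real CARD('v \<times> 'v))"
  using assms(1,2)
proof (induction "card {a. 0 < x $ a}" arbitrary: x v rule: less_induct)
  case less
  let ?K = "real CARD('v \<times> 'v)"
  show ?case
  proof (cases "v = 0")
    case True
    then show ?thesis
      using less.prems by (intro bexI[of _ 0]) (auto simp: flows_of_value_def)
  next
    case False
    then have "0 < v"
      using less.prems(2) by simp
    then obtain p l where p: "p \<in> flows_of_value src tgt orig dest 1" "\<forall>a. p $ a \<le> ?K"
      and l: "0 < l" "l \<le> v" "x - l *\<^sub>R p \<in> flows_of_value src tgt orig dest (v - l)"
        "l = v \<or> card {a. 0 < (x - l *\<^sub>R p) $ a} < card {a. 0 < x $ a}"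
      using flow_peel_unit_flow[OF less.prems(1) _ od] by blast
    obtain y' where y': "y' \<in> flows_of_value src tgt orig dest (v - l)"
      "y' \<le> x - l *\<^sub>R p" "\<forall>a. y' $ a \<le> (v - l) * ?K"
    proof (cases "l = v")
      case True
      then show ?thesis
        using that[of 0] l(3) by (auto simp: flows_of_value_def)
    next
      case False
      then have "card {a. 0 < (x - l *\<^sub>R p) $ a} < card {a. 0 < x $ a}"
        using l(4) by blast
      then show ?thesis
        using that less.hyps[OF _ l(3)] l(2) by auto
    qed
    show ?thesis
    proof (intro bexI[of _ "y' + l *\<^sub>R p"] conjI allI)
      show "y' + l *\<^sub>R p \<in> flows_of_value src tgt orig dest v"
        using y'(1) p(1) \<open>0 < l\<close>
        by (auto simp: flows_of_value_def inner_add_right algebra_simps less_eq_vec_def)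
      show "y' + l *\<^sub>R p \<le> x"
        using y'(2) by (simp add: less_eq_vec_def algebra_simps)
      have lp_bound: "l * p $ a \<le> l * ?K" for a
        using p(2) \<open>0 < l\<close> by (simp add: mult_left_mono)
      show "(y' + l *\<^sub>R p) $ a \<le> v * ?K" for a
        using y'(3)[rule_format, of a] lp_bound[of a] by (simp add: algebra_simps)
    qed
  qed
qed

lemma polyhedron_flows:
  fixes src tgt :: "'a::finite \<Rightarrow> 'v::finite"
  shows "polyhedron (flows src tgt orig dest)"
proof -
  have flows_eq: "flows src tgt orig dest =
      (\<Inter>i. {x. incidence src tgt i \<bullet> x = (if i = orig then 1 else if i = dest then - 1 else 0)})
      \<inter> (\<Inter>a. {x. axis a 1 \<bullet> x \<ge> 0})"
    by (auto simp: flows_eq_flows_of_value flows_of_value_def less_eq_vec_def inner_axis')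
  show ?thesis
    unfolding flows_eq
    by (intro polyhedron_Int polyhedron_Inter) (auto simp: polyhedron_hyperplane polyhedron_halfspace_ge)
qed

lemma linear_restr: "linear (restr \<sigma>)"
  by (intro linearI) (simp_all add: restr_def vec_eq_iff)

lemma restr_le_iff: "restr \<sigma> x \<le> u \<longleftrightarrow> (\<forall>k. x $ \<sigma> k \<le> u $ k)"
  by (simp add: restr_def less_eq_vec_def)

section \<open>The pricing problem\<close>

locale network_pricing =
  fixes src tgt :: "'a::finite \<Rightarrow> 'v::finite" and \<sigma> :: "'k::finite \<Rightarrow> 'a" and c :: "real^'a"
    and orig dest :: 'v
  assumes orig_neq_dest: "orig \<noteq> dest"
    and cost_nonneg: "0 \<le> c"
begin

abbreviation "X \<equiv> flows src tgt orig dest"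
abbreviation "f \<equiv> fval src tgt orig dest \<sigma> c"
abbreviation "g \<equiv> gfun src tgt orig dest \<sigma> c"

definition bounded_flows :: "(real^'a) set" where
  "bounded_flows = {x \<in> X. \<forall>a. x $ a \<le> real CARD('v \<times> 'v)}"

lemma convex_flows: "convex X" and closed_flows: "closed X"
  using polyhedron_flows polyhedron_imp_convex polyhedron_imp_closed by blast+

lemma flows_nonneg: "x \<in> X \<Longrightarrow> 0 \<le> x"
  by (simp add: flows_eq_flows_of_value flows_of_value_def)

lemma flows_dominate_bounded_flows: "x \<in> X \<Longrightarrow> \<exists>y\<in>bounded_flows. y \<le> x"
  using flow_dominates_bounded_flow[of x src tgt orig dest 1] orig_neq_dest
  by (auto simp: bounded_flows_def flows_eq_flows_of_value)

lemma polytope_bounded_flows: "polytope bounded_flows"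
proof -
  have "bounded_flows = X \<inter> cbox 0 (\<chi> a. real CARD('v \<times> 'v))"
    using flows_nonneg by (auto simp: bounded_flows_def mem_box_cart less_eq_vec_def)
  then show ?thesis
    by (simp add: polytope_eq_bounded_polyhedron polyhedron_flows bounded_Int bounded_cbox)
qed

lemma linear_restr_cost: "linear (\<lambda>y. (restr \<sigma> y, c \<bullet> y))"
  by (intro linearI) (simp_all add: restr_def vec_eq_iff inner_add_right)

lemma fval_nonneg: "0 \<le> t \<Longrightarrow> f t = (INF x\<in>X. ereal (c \<bullet> x + t \<bullet> restr \<sigma> x))"
  by (simp add: fval_def less_eq_vec_def)

lemma fval_not_nonneg: "\<not> 0 \<le> t \<Longrightarrow> f t = -\<infinity>"
  by (auto simp: fval_def less_eq_vec_def)

lemma fval_le: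
  assumes "0 \<le> t" "x \<in> X"
  shows "f t \<le> ereal (c \<bullet> x + t \<bullet> restr \<sigma> x)"
  unfolding fval_nonneg[OF assms(1)] by (rule INF_lower[OF assms(2)])

lemma fval_ge:
  assumes "0 \<le> t" "\<forall>y\<in>bounded_flows. \<gamma> \<le> c \<bullet> y + t \<bullet> restr \<sigma> y"
  shows "ereal \<gamma> \<le> f t"
  unfolding fval_nonneg[OF assms(1)]
proof (rule INF_greatest)
  fix x assume "x \<in> X"
  then obtain y where "y \<in> bounded_flows" "y \<le> x"
    using flows_dominate_bounded_flows by blast
  then have "\<gamma> \<le> c \<bullet> y + t \<bullet> restr \<sigma> y"
    using assms(2) by blast
  also have "\<dots> \<le> c \<bullet> x + t \<bullet> restr \<sigma> x"
    using \<open>y \<le> x\<close> cost_nonneg assms(1)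
    by (intro add_mono nonneg_inner_mono) (auto simp: restr_def less_eq_vec_def)
  finally show "ereal \<gamma> \<le> ereal (c \<bullet> x + t \<bullet> restr \<sigma> x)"
    by simp
qed

lemma gfun_le_cost:
  assumes "y \<in> X" "restr \<sigma> y \<le> u"
  shows "g u \<le> ereal (c \<bullet> y)"
  unfolding gfun_def
proof (rule SUP_least)
  fix t :: "real^'k"
  show "f t - ereal (t \<bullet> u) \<le> ereal (c \<bullet> y)"
  proof (cases "0 \<le> t")
    case True
    have "f t - ereal (t \<bullet> u) \<le> ereal (c \<bullet> y + t \<bullet> restr \<sigma> y) - ereal (t \<bullet> u)"
      using fval_le[OF True assms(1)] by (rule ereal_minus_mono) simp
    also have "\<dots> \<le> ereal (c \<bullet> y)"
      using nonneg_inner_mono[OF True assms(2)] by simp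
    finally show ?thesis .
  qed (simp add: fval_not_nonneg)
qed

lemma antimono_gfun: "antimono g"
proof (rule antimonoI)
  fix u u' :: "real^'k" assume "u \<le> u'"
  show "g u' \<le> g u"
    unfolding gfun_def
  proof (rule SUP_mono)
    fix t :: "real^'k"
    show "\<exists>t'\<in>UNIV. f t - ereal (t \<bullet> u') \<le> f t' - ereal (t' \<bullet> u)"
    proof (cases "0 \<le> t")
      case True
      then have "t \<bullet> u \<le> t \<bullet> u'"
        using \<open>u \<le> u'\<close> by (rule nonneg_inner_mono)
      then show ?thesis
        by (intro bexI[of _ t]) (auto intro: ereal_minus_mono)
    qed (simp add: fval_not_nonneg)
  qed
qed

lemma fval_ge_multiplier:
  assumes "\<not> (\<exists>y\<in>bounded_flows. restr \<sigma> y \<le> u \<and> c \<bullet> y < \<gamma>)"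
  shows "\<exists>t\<ge>0. ereal (\<gamma> + t \<bullet> u) \<le> f t"
  using polytope_lagrange_multiplier[OF polytope_bounded_flows linear_restr assms] fval_ge
  by (metis add.commute)

lemma gfun_ge:
  assumes "\<not> (\<exists>y\<in>bounded_flows. restr \<sigma> y \<le> u \<and> c \<bullet> y < \<gamma>)"
  shows "ereal \<gamma> \<le> g u"
proof -
  obtain t where "ereal (\<gamma> + t \<bullet> u) \<le> f t"
    using fval_ge_multiplier[OF assms] by blast
  then have "ereal (\<gamma> + t \<bullet> u) - ereal (t \<bullet> u) \<le> f t - ereal (t \<bullet> u)"
    by (rule ereal_minus_mono) simp
  also have "\<dots> \<le> g u"
    unfolding gfun_def by (rule SUP_upper) simp
  finally show ?thesis
    by simp
qed

lemma gfun_attained: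
  assumes "g u = ereal \<gamma>"
  shows "\<exists>x\<in>X. restr \<sigma> x \<le> u \<and> c \<bullet> x = \<gamma>"
proof -
  define Y where "Y = bounded_flows \<inter> {y. restr \<sigma> y \<le> u}"
  have "Y \<noteq> {}"
  proof
    assume "Y = {}"
    then have "ereal (\<gamma> + 1) \<le> g u"
      by (intro gfun_ge) (auto simp: Y_def)
    then show False
      using assms by simp
  qed
  moreover have "compact Y"
  proof -
    have "closed {y. restr \<sigma> y \<le> u}"
      unfolding restr_le_iff by (auto intro!: closed_Collect_all closed_Collect_le continuous_intros)
    then show ?thesis
      unfolding Y_def by (intro compact_Int_closed polytope_imp_compact polytope_bounded_flows)
  qed
  ultimately have "\<exists>x\<in>Y. \<forall>y\<in>Y. c \<bullet> x \<le> c \<bullet> y"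
    by (intro continuous_attains_inf) (auto intro: continuous_intros)
  then obtain x where x: "x \<in> Y" "\<forall>y\<in>Y. c \<bullet> x \<le> c \<bullet> y"
    by blast
  then have "ereal (c \<bullet> x) \<le> g u"
    by (intro gfun_ge) (auto simp: Y_def not_less)
  moreover have "g u \<le> ereal (c \<bullet> x)"
    using x(1) by (intro gfun_le_cost) (auto simp: Y_def bounded_flows_def)
  ultimately show ?thesis
    using x(1) assms by (auto simp: Y_def bounded_flows_def)
qed

lemma gfun_multiplier:
  assumes "g u = ereal \<gamma>"
  shows "\<exists>t\<ge>0. ereal (\<gamma> + t \<bullet> u) \<le> f t"
proof (rule fval_ge_multiplier)
  show "\<not> (\<exists>y\<in>bounded_flows. restr \<sigma> y \<le> u \<and> c \<bullet> y < \<gamma>)"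
    using gfun_le_cost assms by (force simp: bounded_flows_def)
qed

lemma extreme_point_of_epi_imp_extreme_flow:
  assumes ext: "(w, z) extreme_point_of epi g"
  shows "\<exists>e. e extreme_point_of X \<and> restr \<sigma> e = w \<and> c \<bullet> e = z"
proof -
  define S where "S = X \<inter> (\<lambda>y. (restr \<sigma> y, c \<bullet> y)) -` {(w, z)}"
  have "S face_of X"
    unfolding S_def using ext gfun_le_cost convex_flows
    by (intro face_of_linear_preimage linear_restr_cost) (auto simp: face_of_singleton epi_def)
  obtain x where x: "x \<in> X" "restr \<sigma> x \<le> w" "c \<bullet> x = z"
    using gfun_attained extreme_point_of_epi_eq[OF ext] by blast
  then have "x \<in> S"
    using extreme_point_of_epi_antimono[OF antimono_gfun ext, of "restr \<sigma> x" "c \<bullet> x"]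
      gfun_le_cost[of x "restr \<sigma> x"] by (auto simp: S_def epi_def)
  moreover have "closed S"
    using convex_flows closed_flows \<open>S face_of X\<close> by (rule face_of_imp_closed)
  moreover have "\<forall>y\<in>S. 0 \<le> y"
    using flows_nonneg by (simp add: S_def)
  ultimately obtain e where "e extreme_point_of S"
    using extreme_point_exists_nonneg face_of_imp_convex[OF \<open>S face_of X\<close>] by blast
  then show ?thesis
    using extreme_point_of_face[OF \<open>S face_of X\<close>] by (auto simp: S_def)
qed

lemma bilevel_feasible_if_multiplier:
  assumes "x \<in> X" "0 \<le> t" "ereal (c \<bullet> x + t \<bullet> restr \<sigma> x) \<le> f t"
  shows "bilevel_feasible src tgt orig dest \<sigma> c x"
  unfolding bilevel_feasible_def
proof (intro conjI)
  show "epi (\<lambda>t. - f t) \<subseteq> {(t, z). z \<ge> - (c \<bullet> x) - t \<bullet> restr \<sigma> x}"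
  proof (clarsimp simp: epi_def)
    fix t' z assume z: "- f t' \<le> ereal z"
    then have "0 \<le> t'"
      using fval_not_nonneg by fastforce
    then have "- ereal (c \<bullet> x + t' \<bullet> restr \<sigma> x) \<le> - f t'"
      using fval_le[OF _ assms(1)] by (simp only: ereal_minus_le_minus)
    then have "- ereal (c \<bullet> x + t' \<bullet> restr \<sigma> x) \<le> ereal z"
      using z by (rule order_trans)
    then show "- (c \<bullet> x) - t' \<bullet> restr \<sigma> x \<le> z"
      by simp
  qed
  have "- f t \<le> - ereal (c \<bullet> x + t \<bullet> restr \<sigma> x)"
    using assms(3) by (simp only: ereal_minus_le_minus)
  then have "- f t \<le> ereal (- (c \<bullet> x) - t \<bullet> restr \<sigma> x)"
    by simp
  then show "epi (\<lambda>t. - f t) \<inter> {(t, z). z = - (c \<bullet> x) - t \<bullet> restr \<sigma> x} \<noteq> {}"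
    by (auto simp: epi_def)
qed (fact assms(1))

end

theorem proposition4:
  fixes src tgt :: "'a::finite \<Rightarrow> 'v::finite"
    and \<sigma> :: "'k::finite \<Rightarrow> 'a"
    and c :: "real^'a"
    and orig dest :: 'v
    and w :: "real^'k"
  assumes simple: "inj (\<lambda>a. (src a, tgt a))"
    and inj_sigma: "inj \<sigma>"
    and proper: "range \<sigma> \<noteq> UNIV"
    and c_nonneg: "\<forall>a. 0 \<le> c $ a"
    and od: "orig \<noteq> dest"
    and tollfree: "(orig, dest) \<in> {(src a, tgt a) | a. a \<notin> range \<sigma>}\<^sup>*"
    and w_nonneg: "\<forall>k. 0 \<le> w $ k"
    and sbf: "strongly_bilevel_feasible src tgt orig dest \<sigma> c w"
  shows "\<exists>x. x extreme_point_of flows src tgt orig dest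
             \<and> bilevel_feasible src tgt orig dest \<sigma> c x
             \<and> restr \<sigma> x = w"
proof -
  interpret network_pricing src tgt \<sigma> c orig dest
    using od c_nonneg by unfold_locales (auto simp: less_eq_vec_def)
  obtain z where ext: "(w, z) extreme_point_of epi g"
    using sbf reaction_set_singleton_imp_extreme_point unfolding strongly_bilevel_feasible_def by blast
  then obtain e where e: "e extreme_point_of X" "restr \<sigma> e = w" "c \<bullet> e = z"
    using extreme_point_of_epi_imp_extreme_flow by blast
  obtain t where "0 \<le> t" "ereal (z + t \<bullet> w) \<le> f t"
    using gfun_multiplier extreme_point_of_epi_eq[OF ext] by blast
  then have "bilevel_feasible src tgt orig dest \<sigma> c e"
    using e by (intro bilevel_feasible_if_multiplier) (auto simp: extreme_point_of_def)
  then show ?thesis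
    using e by blast
qed

end
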